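(* Let $n$ be a positive integer and $d\in\Delta(n)$. Write $d=(d_1,\dots,d_L)$ with $d_L>0$ its last nonzero entry and let $q=\max_k d_k$, so that $d=(1,2,\dots,q,d_{q+1},\dots,d_L)$ with $d_{q+1}\le q$. Set $b_i=d_i-d_{i+1}$ for $q\le i<L$ and $b_L=d_L$. Then \[\big|\,[\,d\,]_q\,\big|=\big|\,[\,d\,]\cap\mathcal{P}(n,q)\,\big|=\prod_{i=q}^{L-1}\binom{b_i+b_{i+1}}{b_i},\] where an empty product equals $1$.
   Context: A partition of a positive integer $n$ is a finite non-increasing sequence $\alpha=(\alpha_1,\dots,\alpha_l)$ of positive integers with sum $n$; $\mathcal{P}(n)$ is the set of partitions of $n$, $\alpha_i=0$ for $i>l$, and $\mathcal{P}(n,k)$ is the set of partitions of $n$ with exactly $k$ nonzero parts. The diagonal sequence is $\delta(\alpha)=(d_k)_{k\ge1}$ with $d_k=|\{i:1\le i\le k,\ \alpha_i+i-1\ge k\}|$, trailing zeros omitted; $\Delta(n)=\{\delta(\alpha):\alpha\in\mathcal{P}(n)\}$, $[\,d\,]=\{\alpha\in\mathcal{P}(n):\delta(\alpha)=d\}$, and $[\,d\,]_k=[\,d\,]\cap\mathcal{P}(n,k)$. *)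

theory Defs
  imports Main
begin

definition partitions :: "nat \<Rightarrow> nat list set" where
  "partitions n = {\<alpha>. sorted_wrt (\<ge>) \<alpha> \<and> (\<forall>x\<in>set \<alpha>. 0 < x) \<and> sum_list \<alpha> = n}"

definition partitions_k :: "nat \<Rightarrow> nat \<Rightarrow> nat list set" where
  "partitions_k n k = {\<alpha> \<in> partitions n. length \<alpha> = k}"

definition part :: "nat list \<Rightarrow> nat \<Rightarrow> nat" where
  "part \<alpha> i = (if 1 \<le> i \<and> i \<le> length \<alpha> then \<alpha> ! (i - 1) else 0)"

text \<open>Diagonal sequence as a function k \<mapsto> d_k (k \<ge> 1); trailing zeros are implicit.\<close>
definition delta :: "nat list \<Rightarrow> nat \<Rightarrow> nat" where
  "delta \<alpha> k = card {i. 1 \<le> i \<and> i \<le> k \<and> part \<alpha> i + i - 1 \<ge> k}"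

definition Delta :: "nat \<Rightarrow> (nat \<Rightarrow> nat) set" where
  "Delta n = delta ` partitions n"

definition diag_class :: "nat \<Rightarrow> (nat \<Rightarrow> nat) \<Rightarrow> nat list set" where
  "diag_class n d = {\<alpha> \<in> partitions n. delta \<alpha> = d}"

definition diag_class_k :: "nat \<Rightarrow> (nat \<Rightarrow> nat) \<Rightarrow> nat \<Rightarrow> nat list set" where
  "diag_class_k n d k = diag_class n d \<inter> partitions_k n k"

end

theory Submission
  imports Defs "HOL-Combinatorics.Multiset_Permutations"
begin

(* Let q be the diagonal rank of a partition alpha: the largest s <= length alpha with
   alpha_i + i >= s for all i < s (0-indexed). Then d_k = k for k <= q and d is
   non-increasing from q on, so q = max d_k. A partition with exactly q parts and diagonal
   sequence d is the staircase (q, q-1, ..., 1) plus a list m of q naturals whose ascents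
   m_(i+1) - m_i are at most one, and d_(q+j+1) counts the entries of m exceeding j. So the
   partitions to be counted correspond to the arrangements with ascents at most one of the
   multiset with c_v = b_(q+v) copies of each v. Such arrangements are counted by peeling off
   the top value u+1: an arrangement is determined by its subsequence of entries <= u and its
   subsequence of entries >= u (the shared entries u are matched in order); the former is an
   arbitrary arrangement with ascents at most one of the smaller values and the latter an
   arbitrary word in u and u+1, which gives the factor binom(c_u + c_(u+1), c_u). *)

abbreviation ascents_le_one :: "nat list \<Rightarrow> bool" where
  "ascents_le_one \<equiv> successively (\<lambda>x y. y \<le> Suc x)"

lemma ascents_le_one_Cons:
  "ascents_le_one (a # l) \<longleftrightarrow> (case l of [] \<Rightarrow> True | b # _ \<Rightarrow> b \<le> Suc a) \<and> ascents_le_one l"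
  by (cases l) auto

lemma ascents_le_one_const:
  assumes "\<forall>x\<in>set w. x = c"
  shows "ascents_le_one w"
proof -
  have "w ! i = c" if "i < length w" for i
    using assms nth_mem[OF that] by blast
  then show ?thesis
    by (simp add: successively_conv_nth)
qed

(* Inverse of splitting a list with entries at most Suc u into its entries <= u and its
   entries >= u; the entries u lie in both parts and are matched in order. *)
fun merge_top :: "nat \<Rightarrow> nat list \<Rightarrow> nat list \<Rightarrow> nat list" where
  "merge_top u [] w = w"
| "merge_top u (x # xs) [] = x # xs"
| "merge_top u (x # xs) (y # ys) =
    (if y = Suc u then y # merge_top u (x # xs) ys
     else if x = u then x # merge_top u xs ys
     else x # merge_top u xs (y # ys))"

lemma merge_top_Suc: "merge_top u xs (Suc u # ys) = Suc u # merge_top u xs ys"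
  by (cases xs) auto

lemma ascents_le_one_first_ge_le:
  assumes "ascents_le_one (z # r)" "z < u" "filter (\<lambda>x. u \<le> x) r = y # ys"
  shows "y \<le> u"
  using assms
proof (induction r arbitrary: z)
  case (Cons r0 rr)
  then show ?case
    by (cases "u \<le> r0") (auto dest: Cons.IH[of r0])
qed auto

lemma merge_top_filter:
  assumes "ascents_le_one m" "\<forall>x\<in>set m. x \<le> Suc u"
  shows "merge_top u (filter (\<lambda>x. x \<le> u) m) (filter (\<lambda>x. u \<le> x) m) = m"
  using assms
proof (induction m)
  case (Cons z r)
  have IH: "merge_top u (filter (\<lambda>x. x \<le> u) r) (filter (\<lambda>x. u \<le> x) r) = r"
    using Cons by (simp add: ascents_le_one_Cons)
  consider (top) "z = Suc u" | (shared) "z = u" | (low) "z < u"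
    using Cons.prems(2) by force
  then show ?case
  proof cases
    case low
    show ?thesis
    proof (cases "filter (\<lambda>x. u \<le> x) r")
      case Nil
      then have "filter (\<lambda>x. x \<le> u) r = r"
        by (auto simp: filter_empty_conv filter_id_conv)
      then show ?thesis
        using low Nil by simp
    next
      case (Cons y ys)
      then have "y = u"
        using ascents_le_one_first_ge_le[OF Cons.prems(1) low Cons] by (metis filter_eq_ConsD le_antisym)
      then show ?thesis
        using low Cons IH by simp
    qed
  qed (use IH merge_top_Suc in simp_all)
qed simp

lemma filter_merge_top:
  assumes "\<forall>x\<in>set xs. x \<le> u" "\<forall>y\<in>set w. y = u \<or> y = Suc u"
    and "count_list xs u = count_list w u"
  shows "filter (\<lambda>x. x \<le> u) (merge_top u xs w) = xs \<and> filter (\<lambda>x. u \<le> x) (merge_top u xs w) = w"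
  using assms
proof (induction u xs w rule: merge_top.induct)
  case (1 u w)
  then have "u \<notin> set w"
    by (simp add: count_list_0_iff)
  then have "\<forall>y\<in>set w. y = Suc u"
    using "1.prems"(2) by metis
  then show ?case
    by (auto simp: filter_empty_conv filter_id_conv)
next
  case (2 u x xs)
  then have "u \<notin> set (x # xs)"
    by (metis count_list_0_iff count_list.simps(1))
  then have "\<forall>y\<in>set (x # xs). y < u"
    using "2.prems"(1) le_neq_implies_less by blast
  then show ?case
    by (auto simp: filter_empty_conv filter_id_conv simp del: set_simps(2)) auto
next
  case (3 u x xs y ys)
  consider "y = Suc u" | "y = u" "x = u" | "y = u" "x < u"
    using "3.prems" by force
  then show ?case
    by cases (use 3 in auto)
qed

lemma ascents_le_one_merge_top:
  assumes "ascents_le_one xs" "\<forall>x\<in>set xs. x \<le> u" "\<forall>y\<in>set w. y = u \<or> y = Suc u"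
    and "count_list xs u = count_list w u"
  shows "ascents_le_one (merge_top u xs w)"
  using assms
proof (induction u xs w rule: merge_top.induct)
  case (1 u w)
  then have "u \<notin> set w"
    by (simp add: count_list_0_iff)
  then have "\<forall>y\<in>set w. y = Suc u"
    using "1.prems"(3) by metis
  then show ?case
    by (simp add: ascents_le_one_const)
next
  case (2 u x xs)
  then show ?case
    by simp
next
  case (3 u x xs y ys)
  have bounded: "\<forall>z\<in>set (merge_top u a b). z \<le> Suc u"
    if "\<forall>x\<in>set a. x \<le> u" "\<forall>y\<in>set b. y = u \<or> y = Suc u" for a b
    using that by (induction u a b rule: merge_top.induct) auto
  consider (top) "y = Suc u" | (shared) "y = u" "x = u" | (low) "y = u" "x \<noteq> u"
    using "3.prems"(3) by force
  then show ?case
  proof cases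
    case top
    then have "ascents_le_one (merge_top u (x # xs) ys)"
      using 3 by auto
    moreover have "\<forall>z\<in>set (merge_top u (x # xs) ys). z \<le> Suc u"
      using bounded[of "x # xs" ys] "3.prems" by auto
    ultimately show ?thesis
      using top by (auto simp: ascents_le_one_Cons split: list.split)
  next
    case shared
    then have "ascents_le_one (merge_top u xs ys)"
      using 3 by (auto simp: ascents_le_one_Cons)
    moreover have "\<forall>z\<in>set (merge_top u xs ys). z \<le> Suc u"
      using bounded[of xs ys] "3.prems" by auto
    ultimately show ?thesis
      using shared by (auto simp: ascents_le_one_Cons split: list.split)
  next
    case low
    then have IH: "ascents_le_one (merge_top u xs (y # ys))"
      using "3.IH"(3) "3.prems" by (auto simp: ascents_le_one_Cons)
    show ?thesis
    proof (cases xs)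
      case (Cons x' xs')
      then have "x' \<le> Suc x"
        using "3.prems"(1) by simp
      then show ?thesis
        using IH Cons low by (cases "x' = u") auto
    qed (use low "3.prems"(4) in simp)
  qed
qed

lemma ascents_le_one_filter_le:
  assumes "ascents_le_one m" "\<forall>x\<in>set m. x \<le> Suc u"
  shows "ascents_le_one (filter (\<lambda>x. x \<le> u) m)"
  using assms
proof (induction m)
  case (Cons z r)
  have IH: "ascents_le_one (filter (\<lambda>x. x \<le> u) r)"
    using Cons by (simp add: ascents_le_one_Cons)
  have "y \<le> Suc z" if z: "z \<le> u" and filter_r: "filter (\<lambda>x. x \<le> u) r = y # ys" for y ys
  proof -
    obtain r0 rr where r: "r = r0 # rr"
      using filter_r by (cases r) auto
    then have "r0 \<le> Suc z"
      using Cons.prems(1) by simp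
    moreover have "y \<le> u"
      using filter_r by (metis filter_eq_ConsD)
    ultimately show ?thesis
      using z filter_r r by (cases "r0 \<le> u") auto
  qed
  then show ?case
    using IH by (auto simp: ascents_le_one_Cons split: list.split)
qed simp

lemma card_permutations_of_two_valued_multiset:
  assumes "x \<noteq> y"
  shows "card (permutations_of_multiset (replicate_mset a x + replicate_mset c y)) = (a + c) choose a"
proof -
  let ?M = "replicate_mset a x + replicate_mset c y"
  have "(\<Prod>z\<in>set_mset ?M. fact (count ?M z)) = (\<Prod>z\<in>{x, y}. fact (count ?M z) :: nat)"
    by (rule prod.mono_neutral_left) (auto simp: count_eq_zero_iff)
  also have "\<dots> = fact a * fact c"
    using assms by simp
  finally have "card (permutations_of_multiset ?M) * (fact a * fact c) = fact (a + c)"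
    using card_permutations_of_multiset_aux[of ?M] by simp
  moreover have "fact a * fact c * ((a + c) choose a) = (fact (a + c) :: nat)"
    using binomial_fact_lemma[of a "a + c"] by simp
  ultimately show ?thesis
    by (metis fact_nonzero mult.commute mult_cancel_left no_zero_divisors)
qed

lemma card_ascents_le_one_step:
  assumes "\<forall>x\<in>#C. x \<le> Suc u"
  shows "card {m \<in> permutations_of_multiset C. ascents_le_one m}
       = card {m \<in> permutations_of_multiset (filter_mset (\<lambda>x. x \<le> u) C). ascents_le_one m}
         * ((count C u + count C (Suc u)) choose count C u)"
proof -
  let ?A = "{m \<in> permutations_of_multiset C. ascents_le_one m}"
  let ?A' = "{m \<in> permutations_of_multiset (filter_mset (\<lambda>x. x \<le> u) C). ascents_le_one m}"
  let ?W = "permutations_of_multiset (filter_mset (\<lambda>x. u \<le> x) C)"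
  have top: "filter_mset (\<lambda>x. u \<le> x) C = replicate_mset (count C u) u + replicate_mset (count C (Suc u)) (Suc u)"
  proof (rule multiset_eqI)
    fix v
    have "count C v = 0" if "Suc u < v"
      using assms that by (meson count_eq_zero_iff not_le)
    then show "count (filter_mset (\<lambda>x. u \<le> x) C) v = count (replicate_mset (count C u) u + replicate_mset (count C (Suc u)) (Suc u)) v"
      by (auto simp: not_le le_Suc_eq)
  qed
  have split_bij: "bij_betw (\<lambda>m. (filter (\<lambda>x. x \<le> u) m, filter (\<lambda>x. u \<le> x) m)) ?A (?A' \<times> ?W)"
  proof (rule bij_betw_byWitness[where f' = "\<lambda>(xs, w). merge_top u xs w"])
    show "\<forall>m\<in>?A. (\<lambda>(xs, w). merge_top u xs w) (filter (\<lambda>x. x \<le> u) m, filter (\<lambda>x. u \<le> x) m) = m"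
      using assms by (auto simp: permutations_of_multiset_def intro: merge_top_filter)
    show "(\<lambda>m. (filter (\<lambda>x. x \<le> u) m, filter (\<lambda>x. u \<le> x) m)) ` ?A \<subseteq> ?A' \<times> ?W"
      using assms by (auto simp: permutations_of_multiset_def intro: ascents_le_one_filter_le)
  next
    have merge_props: "(filter (\<lambda>x. x \<le> u) (merge_top u xs w), filter (\<lambda>x. u \<le> x) (merge_top u xs w)) = (xs, w)
        \<and> merge_top u xs w \<in> ?A" if "(xs, w) \<in> ?A' \<times> ?W" for xs w
    proof -
      have xs: "mset xs = filter_mset (\<lambda>x. x \<le> u) C" "ascents_le_one xs"
        and w: "mset w = filter_mset (\<lambda>x. u \<le> x) C"
        using that by (auto simp: permutations_of_multiset_def)
      have hyps: "\<forall>x\<in>set xs. x \<le> u" "\<forall>y\<in>set w. y = u \<or> y = Suc u" "count_list xs u = count_list w u"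
        using xs(1) w top by (auto simp flip: set_mset_mset count_mset split: if_splits)
      note filters = filter_merge_top[OF hyps]
      have "mset (merge_top u xs w) = C"
      proof (rule multiset_eqI)
        fix v
        have "count (mset (merge_top u xs w)) v
            = (if v \<le> u then count (mset (filter (\<lambda>x. x \<le> u) (merge_top u xs w))) v
               else count (mset (filter (\<lambda>x. u \<le> x) (merge_top u xs w))) v)"
          by simp
        then show "count (mset (merge_top u xs w)) v = count C v"
          using filters xs(1) w by simp
      qed
      then show ?thesis
        using filters ascents_le_one_merge_top[OF xs(2) hyps]
        by (simp add: permutations_of_multiset_def)
    qed
    then show "\<forall>p\<in>?A' \<times> ?W. (\<lambda>m. (filter (\<lambda>x. x \<le> u) m, filter (\<lambda>x. u \<le> x) m)) ((\<lambda>(xs, w). merge_top u xs w) p) = p"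
      and "(\<lambda>(xs, w). merge_top u xs w) ` (?A' \<times> ?W) \<subseteq> ?A"
      by auto
  qed
  have "card ?A = card ?A' * card ?W"
    using bij_betw_same_card[OF split_bij] by (simp add: card_cartesian_product)
  also have "card ?W = (count C u + count C (Suc u)) choose count C u"
    by (simp add: top card_permutations_of_two_valued_multiset)
  finally show ?thesis .
qed

lemma card_ascents_le_one:
  assumes "\<forall>x\<in>#C. x \<le> T"
  shows "card {m \<in> permutations_of_multiset C. ascents_le_one m}
       = (\<Prod>v<T. (count C v + count C (Suc v)) choose count C v)"
  using assms
proof (induction T arbitrary: C)
  case 0
  then have C: "C = replicate_mset (count C 0) 0 + replicate_mset 0 (Suc 0)"
    by (auto intro!: multiset_eqI simp: count_eq_zero_iff)
  have "\<forall>x\<in>set m. x = 0" if "m \<in> permutations_of_multiset C" for m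
    using 0 that by (auto simp: permutations_of_multiset_def)
  then have "{m \<in> permutations_of_multiset C. ascents_le_one m} = permutations_of_multiset C"
    using ascents_le_one_const by blast
  then show ?case
    using card_permutations_of_two_valued_multiset[of 0 "Suc 0" "count C 0" 0] C by simp
next
  case (Suc u)
  let ?C' = "filter_mset (\<lambda>x. x \<le> u) C"
  have "card {m \<in> permutations_of_multiset C. ascents_le_one m}
      = card {m \<in> permutations_of_multiset ?C'. ascents_le_one m} * ((count C u + count C (Suc u)) choose count C u)"
    using Suc.prems by (rule card_ascents_le_one_step)
  also have "card {m \<in> permutations_of_multiset ?C'. ascents_le_one m}
      = (\<Prod>v<u. (count C v + count C (Suc v)) choose count C v)"
    using Suc.IH[of ?C'] by simp
  finally show ?case
    by simp
qed

lemma part_Suc: "part \<alpha> (Suc i) = (if i < length \<alpha> then \<alpha> ! i else 0)"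
  by (simp add: Defs.part_def)

lemma delta_eq_card: "delta \<alpha> k = card {i. i < length \<alpha> \<and> i < k \<and> k \<le> \<alpha> ! i + i}"
proof -
  have "{i. 1 \<le> i \<and> i \<le> k \<and> k \<le> part \<alpha> i + i - 1} = Suc ` {i. i < length \<alpha> \<and> i < k \<and> k \<le> \<alpha> ! i + i}"
  proof (rule set_eqI)
    fix x
    show "x \<in> {i. 1 \<le> i \<and> i \<le> k \<and> k \<le> part \<alpha> i + i - 1}
      \<longleftrightarrow> x \<in> Suc ` {i. i < length \<alpha> \<and> i < k \<and> k \<le> \<alpha> ! i + i}"
      by (cases x) (auto simp: part_Suc)
  qed
  then show ?thesis
    unfolding delta_def by (simp add: card_image)
qed

lemma sum_list_eq_sum_delta:
  assumes "\<forall>i<length \<alpha>. \<alpha> ! i + i \<le> N"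
  shows "sum_list \<alpha> = (\<Sum>k\<in>{1..N}. delta \<alpha> k)"
proof -
  let ?cell = "\<lambda>i k. if i < k \<and> k \<le> \<alpha> ! i + i then 1 else 0 :: nat"
  have "(\<Sum>k\<in>{1..N}. delta \<alpha> k) = (\<Sum>k\<in>{1..N}. \<Sum>i<length \<alpha>. ?cell i k)"
    by (simp add: delta_eq_card sum.If_cases Collect_conj_eq lessThan_def Int_commute)
  also have "\<dots> = (\<Sum>i<length \<alpha>. \<Sum>k\<in>{1..N}. ?cell i k)"
    by (rule sum.swap)
  also have "\<dots> = (\<Sum>i<length \<alpha>. \<alpha> ! i)"
  proof (rule sum.cong)
    fix i assume "i \<in> {..<length \<alpha>}"
    then have "{1..N} \<inter> {k. i < k \<and> k \<le> \<alpha> ! i + i} = {i<..\<alpha> ! i + i}"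
      using assms by auto
    then show "(\<Sum>k\<in>{1..N}. ?cell i k) = \<alpha> ! i"
      by (simp add: sum.If_cases)
  qed simp
  also have "\<dots> = sum_list \<alpha>"
    by (simp add: sum_list_sum_nth atLeast0LessThan)
  finally show ?thesis
    by simp
qed

lemma sum_list_eq_if_delta_eq:
  assumes "delta \<alpha> = delta \<beta>"
  shows "sum_list \<alpha> = sum_list \<beta>"
proof -
  define N where "N = sum_list \<alpha> + length \<alpha> + sum_list \<beta> + length \<beta>"
  have bound: "\<gamma> ! i + i \<le> sum_list \<gamma> + length \<gamma>" if "i < length \<gamma>" for \<gamma> i
    using elem_le_sum_list[OF that] that by simp
  have "sum_list \<alpha> = (\<Sum>k\<in>{1..N}. delta \<alpha> k)"
    by (rule sum_list_eq_sum_delta) (use bound[of _ \<alpha>] in \<open>fastforce simp: N_def\<close>)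
  also have "\<dots> = sum_list \<beta>"
    unfolding assms
    by (rule sum_list_eq_sum_delta[symmetric]) (use bound[of _ \<beta>] in \<open>fastforce simp: N_def\<close>)
  finally show ?thesis .
qed

definition staircase_plus :: "nat list \<Rightarrow> nat list" where
  "staircase_plus m = map (\<lambda>i. m ! i + length m - i) [0..<length m]"

definition staircase_excess :: "nat list \<Rightarrow> nat list" where
  "staircase_excess \<alpha> = map (\<lambda>i. \<alpha> ! i + i - length \<alpha>) [0..<length \<alpha>]"

lemma length_staircase_plus [simp]: "length (staircase_plus m) = length m"
  by (simp add: staircase_plus_def)

lemma length_staircase_excess [simp]: "length (staircase_excess \<alpha>) = length \<alpha>"
  by (simp add: staircase_excess_def)

lemma inj_staircase_plus: "inj staircase_plus"
proof (rule injI)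
  fix m m' assume eq: "staircase_plus m = staircase_plus m'"
  then have len: "length m = length m'"
    by (metis length_staircase_plus)
  show "m = m'"
  proof (rule nth_equalityI)
    fix i assume "i < length m"
    then show "m ! i = m' ! i"
      using nth_map_upt[of i "length m"] arg_cong[OF eq, of "\<lambda>\<alpha>. \<alpha> ! i"] len
      by (simp add: staircase_plus_def)
  qed (rule len)
qed

lemma staircase_plus_excess:
  assumes "\<forall>i<length \<alpha>. length \<alpha> \<le> \<alpha> ! i + i"
  shows "staircase_plus (staircase_excess \<alpha>) = \<alpha>"
  using assms by (intro nth_equalityI) (simp_all add: staircase_plus_def staircase_excess_def)

lemma ascents_le_one_staircase_excess:
  assumes "sorted_wrt (\<ge>) \<alpha>"
  shows "ascents_le_one (staircase_excess \<alpha>)"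
  unfolding successively_conv_nth
proof (intro allI impI)
  fix i assume "Suc i < length (staircase_excess \<alpha>)"
  then have "\<alpha> ! Suc i \<le> \<alpha> ! i" "Suc i < length \<alpha>"
    using assms by (auto simp: staircase_excess_def sorted_wrt_iff_nth_less)
  then show "staircase_excess \<alpha> ! Suc i \<le> Suc (staircase_excess \<alpha> ! i)"
    by (simp add: staircase_excess_def)
qed

lemma sorted_staircase_plus:
  assumes "ascents_le_one m"
  shows "sorted_wrt (\<ge>) (staircase_plus m)"
proof -
  have "staircase_plus m ! Suc i \<le> staircase_plus m ! i" if "Suc i < length m" for i
    using successively_nth[OF assms that] that by (simp add: staircase_plus_def)
  then show ?thesis
    by (simp add: sorted_wrt_iff_nth_Suc_transp)
qed

lemma staircase_plus_in_partitions_k: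
  assumes "ascents_le_one m" "sum_list (staircase_plus m) = n"
  shows "staircase_plus m \<in> partitions_k n (length m)"
  using sorted_staircase_plus[OF assms(1)] assms(2)
  by (auto simp: partitions_k_def partitions_def staircase_plus_def)

lemma delta_staircase_plus:
  "delta (staircase_plus m) k = (if k \<le> length m then k else length (filter (\<lambda>x. k - length m \<le> x) m))"
proof -
  have "{i. i < length m \<and> i < k \<and> k \<le> staircase_plus m ! i + i}
      = (if k \<le> length m then {..<k} else {i. i < length m \<and> k - length m \<le> m ! i})"
    by (auto simp: staircase_plus_def)
  then show ?thesis
    by (simp add: delta_eq_card length_filter_conv_card)
qed

lemma delta_staircase_plus_Suc:
  "delta (staircase_plus m) (length m + Suc j) = length (filter (\<lambda>x. j < x) m)"
  by (auto simp: delta_staircase_plus intro!: arg_cong[where f = length] filter_cong)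

lemma count_mset_eq_delta_staircase_plus:
  "count (mset m) v = delta (staircase_plus m) (length m + v) - delta (staircase_plus m) (length m + Suc v)"
proof -
  have "length (filter (\<lambda>x. v \<le> x) m) = count (mset m) v + length (filter (\<lambda>x. Suc v \<le> x) m)"
    by (induction m) auto
  then show ?thesis
    by (cases v) (simp_all add: delta_staircase_plus)
qed

lemma delta_staircase_plus_eq_iff:
  assumes "length m = length m'"
  shows "delta (staircase_plus m) = delta (staircase_plus m') \<longleftrightarrow> mset m = mset m'"
proof
  assume "delta (staircase_plus m) = delta (staircase_plus m')"
  then show "mset m = mset m'"
    using assms by (simp add: multiset_eq_iff count_mset_eq_delta_staircase_plus)
next
  assume "mset m = mset m'"
  then have "length (filter P m) = length (filter P m')" for P
    by (metis mset_filter size_mset)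
  then show "delta (staircase_plus m) = delta (staircase_plus m')"
    using assms by (simp add: delta_staircase_plus fun_eq_iff)
qed

lemma nat_intermed_val_up_steps:
  fixes f :: "nat \<Rightarrow> nat"
  assumes "f a \<le> k" "k < f b" "a \<le> b" "\<forall>i. a \<le> i \<longrightarrow> i < b \<longrightarrow> f (Suc i) \<le> Suc (f i)"
  shows "\<exists>j. a \<le> j \<and> j < b \<and> f j = k"
  using assms
proof (induction b)
  case (Suc b)
  show ?case
  proof (cases "a \<le> b \<and> k < f b")
    case True
    then obtain j where "a \<le> j \<and> j < b \<and> f j = k"
      using Suc.IH Suc.prems by auto
    then show ?thesis
      by (intro exI[of _ j]) auto
  next
    case False
    have "a \<noteq> Suc b"
      using Suc.prems by auto
    then have "a \<le> b"
      using Suc.prems by simp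
    moreover have "f (Suc b) \<le> Suc (f b)"
      using Suc.prems(4) \<open>a \<le> b\<close> by simp
    ultimately have "f b = k"
      using False Suc.prems(2) by simp
    then show ?thesis
      using \<open>a \<le> b\<close> by (intro exI[of _ b]) auto
  qed
qed simp

lemma partitions_nth_pos: "\<alpha> \<in> partitions n \<Longrightarrow> i < length \<alpha> \<Longrightarrow> 0 < \<alpha> ! i"
  unfolding partitions_def by (auto simp: nth_mem)

lemma partitions_nth_antimono:
  "\<alpha> \<in> partitions n \<Longrightarrow> i \<le> j \<Longrightarrow> j < length \<alpha> \<Longrightarrow> \<alpha> ! j \<le> \<alpha> ! i"
  unfolding partitions_def by (cases "i = j") (auto simp: sorted_wrt_iff_nth_less)

definition diag_rank :: "nat list \<Rightarrow> nat" where
  "diag_rank \<alpha> = Max {s. s \<le> length \<alpha> \<and> (\<forall>i<s. s \<le> \<alpha> ! i + i)}"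

lemma diag_rank_mem: "diag_rank \<alpha> \<le> length \<alpha> \<and> (\<forall>i<diag_rank \<alpha>. diag_rank \<alpha> \<le> \<alpha> ! i + i)"
proof -
  have "finite {s. s \<le> length \<alpha> \<and> (\<forall>i<s. s \<le> \<alpha> ! i + i)}"
    by (rule finite_subset[of _ "{..length \<alpha>}"]) auto
  from Max_in[OF this] show ?thesis
    unfolding diag_rank_def by blast
qed

lemma diag_rank_ge:
  assumes "s \<le> length \<alpha>" "\<forall>i<s. s \<le> \<alpha> ! i + i"
  shows "s \<le> diag_rank \<alpha>"
  unfolding diag_rank_def
  by (rule Max_ge) (use assms in \<open>auto intro: finite_subset[of _ "{..length \<alpha>}"]\<close>)

lemma delta_eq_self_below_diag_rank:
  assumes "k \<le> diag_rank \<alpha>"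
  shows "delta \<alpha> k = k"
proof -
  have "i < length \<alpha> \<and> k \<le> \<alpha> ! i + i" if "i < k" for i
    using assms diag_rank_mem[of \<alpha>] that by (meson order.trans less_le_trans)
  then have "{i. i < length \<alpha> \<and> i < k \<and> k \<le> \<alpha> ! i + i} = {..<k}"
    by auto
  then show ?thesis
    by (simp add: delta_eq_card)
qed

lemma exists_nth_add_eq_beyond_diag_rank:
  assumes "\<alpha> \<in> partitions n" "diag_rank \<alpha> \<le> k" "k < length \<alpha>"
  shows "\<exists>j<k. \<alpha> ! j + j = k"
proof -
  have "\<not> (\<forall>i<Suc (diag_rank \<alpha>). Suc (diag_rank \<alpha>) \<le> \<alpha> ! i + i)"
    using diag_rank_ge[of "Suc (diag_rank \<alpha>)" \<alpha>] assms(2,3) by auto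
  then obtain i0 where i0: "i0 \<le> diag_rank \<alpha>" "\<alpha> ! i0 + i0 \<le> diag_rank \<alpha>"
    by (auto simp: not_le less_Suc_eq_le)
  have "\<exists>j. i0 \<le> j \<and> j < k \<and> \<alpha> ! j + j = k"
  proof (rule nat_intermed_val_up_steps[where f = "\<lambda>i. \<alpha> ! i + i"])
    show "\<alpha> ! i0 + i0 \<le> k" "i0 \<le> k"
      using i0 assms(2) by simp_all
    show "k < \<alpha> ! k + k"
      using partitions_nth_pos[OF assms(1) assms(3)] by simp
    show "\<forall>i. i0 \<le> i \<longrightarrow> i < k \<longrightarrow> \<alpha> ! Suc i + Suc i \<le> Suc (\<alpha> ! i + i)"
      using partitions_nth_antimono[OF assms(1), of _ "Suc _"] assms(3) by simp
  qed
  then show ?thesis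
    by blast
qed

lemma delta_Suc_le_beyond_diag_rank:
  assumes "\<alpha> \<in> partitions n" "diag_rank \<alpha> \<le> k"
  shows "delta \<alpha> (Suc k) \<le> delta \<alpha> k"
proof -
  define S where "S k = {i. i < length \<alpha> \<and> i < k \<and> k \<le> \<alpha> ! i + i}" for k
  have finite_S: "finite (S k)" for k
    by (rule finite_subset[of _ "{..<length \<alpha>}"]) (auto simp: S_def)
  have delta_S: "delta \<alpha> k = card (S k)" for k
    by (simp add: delta_eq_card S_def)
  show ?thesis
  proof (cases "length \<alpha> \<le> k")
    case True
    then have "S (Suc k) \<subseteq> S k"
      by (auto simp: S_def)
    then show ?thesis
      by (simp add: delta_S card_mono finite_S)
  next
    case False
    \<comment> \<open>passing to Suc k, the index j leaves and at most k enters\<close>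
    obtain j where j: "j < k" "\<alpha> ! j + j = k"
      using exists_nth_add_eq_beyond_diag_rank[OF assms] False by auto
    have "S (Suc k) \<subseteq> insert k (S k - {j})"
      using j by (auto simp: S_def)
    then have "card (S (Suc k)) \<le> card (insert k (S k - {j}))"
      by (simp add: card_mono finite_S)
    also have "\<dots> \<le> Suc (card (S k - {j}))"
      by (simp add: card_insert_if finite_S)
    also have "\<dots> = card (S k)"
      using j False card_Suc_Diff1[OF finite_S, of j k] by (simp add: S_def)
    finally show ?thesis
      by (simp add: delta_S)
  qed
qed

lemma delta_antimono_beyond_diag_rank:
  assumes "\<alpha> \<in> partitions n" "diag_rank \<alpha> \<le> k" "k \<le> k'"
  shows "delta \<alpha> k' \<le> delta \<alpha> k"
  using assms(3)
proof (induction k' rule: dec_induct)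
  case (step k')
  then show ?case
    using delta_Suc_le_beyond_diag_rank[OF assms(1), of k'] assms(2) by simp
qed simp

lemma delta_le_diag_rank:
  assumes "\<alpha> \<in> partitions n"
  shows "delta \<alpha> k \<le> diag_rank \<alpha>"
proof (cases "k \<le> diag_rank \<alpha>")
  case False
  then show ?thesis
    using delta_antimono_beyond_diag_rank[OF assms, of "diag_rank \<alpha>" k]
      delta_eq_self_below_diag_rank[of "diag_rank \<alpha>" \<alpha>] by simp
qed (simp add: delta_eq_self_below_diag_rank)

lemma delta_eq_0:
  assumes "sum_list \<alpha> + length \<alpha> < k"
  shows "delta \<alpha> k = 0"
proof -
  have "\<not> k \<le> \<alpha> ! i + i" if "i < length \<alpha>" for i
    using elem_le_sum_list[OF that] that assms by linarith
  then have "{i. i < length \<alpha> \<and> i < k \<and> k \<le> \<alpha> ! i + i} = {}"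
    by blast
  then show ?thesis
    by (simp add: delta_eq_card)
qed

lemma finite_delta_support: "finite {k. delta \<alpha> k \<noteq> 0}"
proof -
  have "k \<le> sum_list \<alpha> + length \<alpha>" if "delta \<alpha> k \<noteq> 0" for k
    using delta_eq_0[of \<alpha> k] that not_le by blast
  then have "{k. delta \<alpha> k \<noteq> 0} \<subseteq> {..sum_list \<alpha> + length \<alpha>}"
    by auto
  then show ?thesis
    by (rule finite_subset) simp
qed

lemma diag_rank_pos:
  assumes "\<alpha> \<in> partitions n" "0 < n"
  shows "0 < diag_rank \<alpha>"
proof -
  have "sum_list \<alpha> = n"
    using assms(1) by (simp add: partitions_def)
  then have "\<alpha> \<noteq> []"
    using assms(2) by auto
  then show ?thesis
    using diag_rank_ge[of 1 \<alpha>] partitions_nth_pos[OF assms(1), of 0] by (simp add: Suc_le_eq)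
qed

lemma diag_rank_eq_Max_delta:
  assumes "\<alpha> \<in> partitions n" "0 < n"
  defines "L \<equiv> Max {k. delta \<alpha> k \<noteq> 0}"
  shows "diag_rank \<alpha> \<le> L" "\<And>k. L < k \<Longrightarrow> delta \<alpha> k = 0"
    and "Max (delta \<alpha> ` {1..L}) = diag_rank \<alpha>"
proof -
  have "delta \<alpha> (diag_rank \<alpha>) \<noteq> 0"
    using delta_eq_self_below_diag_rank[of "diag_rank \<alpha>" \<alpha>] diag_rank_pos[OF assms(1,2)] by simp
  then show rank_le: "diag_rank \<alpha> \<le> L"
    unfolding L_def by (intro Max_ge finite_delta_support) simp
  show "delta \<alpha> k = 0" if "L < k" for k
    using Max_ge[OF finite_delta_support, of k \<alpha>] that by (auto simp: L_def)
  show "Max (delta \<alpha> ` {1..L}) = diag_rank \<alpha>"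
  proof (rule Max_eqI)
    show "y \<le> diag_rank \<alpha>" if "y \<in> delta \<alpha> ` {1..L}" for y
      using that delta_le_diag_rank[OF assms(1)] by auto
    show "diag_rank \<alpha> \<in> delta \<alpha> ` {1..L}"
      using delta_eq_self_below_diag_rank[of "diag_rank \<alpha>" \<alpha>] diag_rank_pos[OF assms(1,2)] rank_le
      by (intro image_eqI[of _ _ "diag_rank \<alpha>"]) auto
  qed simp
qed

lemma exists_list_length_filter_greater:
  fixes f :: "nat \<Rightarrow> nat"
  assumes "antimono f" "\<And>j. f j \<le> q" "finite {j. f j \<noteq> 0}"
  shows "\<exists>m. length m = q \<and> (\<forall>j. length (filter (\<lambda>x. j < x) m) = f j)"
proof -
  \<comment> \<open>the conjugate of the partition (f 0, f 1, ...)\<close>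
  define m where "m = map (\<lambda>i. card {j. i < f j}) [0..<q]"
  have finite_level: "finite {j. i < f j}" for i
    by (rule finite_subset[OF _ assms(3)]) auto
  have level: "j < card {j. i < f j} \<longleftrightarrow> i < f j" for i j
  proof
    assume j: "j < card {j. i < f j}"
    show "i < f j"
    proof (rule ccontr)
      assume "\<not> i < f j"
      have "j' < j" if "i < f j'" for j'
      proof (rule ccontr)
        assume "\<not> j' < j"
        then have "f j' \<le> f j"
          using antimonoD[OF assms(1)] by simp
        then show False
          using that \<open>\<not> i < f j\<close> by simp
      qed
      then have "{j. i < f j} \<subseteq> {..<j}"
        by blast
      then have "card {j. i < f j} \<le> j"
        using card_mono[of "{..<j}"] by simp
      then show False
        using j by simp
    qed
  next
    assume "i < f j"
    then have "i < f j'" if "j' \<le> j" for j'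
      using antimonoD[OF assms(1) that] by simp
    then have "{..j} \<subseteq> {j. i < f j}"
      by blast
    then have "card {..j} \<le> card {j. i < f j}"
      by (rule card_mono[OF finite_level])
    then show "j < card {j. i < f j}"
      by simp
  qed
  have "length (filter (\<lambda>x. j < x) m) = f j" for j
  proof -
    have "length (filter (\<lambda>x. j < x) m) = card {i. i < q \<and> j < m ! i}"
      by (simp add: m_def length_filter_conv_card)
    also have "{i. i < q \<and> j < m ! i} = {i. i < q \<and> i < f j}"
      using level by (auto simp: m_def)
    also have "{i. i < q \<and> i < f j} = {..<f j}"
      using assms(2)[of j] by auto
    finally show ?thesis
      by simp
  qed
  moreover have "length m = q"
    by (simp add: m_def)
  ultimately show ?thesis
    by blast
qed

lemma exists_staircase_plus_delta_eq:
  assumes "\<alpha> \<in> partitions n"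
  shows "\<exists>m. length m = diag_rank \<alpha> \<and> delta (staircase_plus m) = delta \<alpha>"
proof -
  let ?q = "diag_rank \<alpha>"
  have "finite {j. delta \<alpha> (?q + Suc j) \<noteq> 0}"
    using finite_vimageI[OF finite_delta_support[of \<alpha>], of "\<lambda>j. ?q + Suc j"] by (simp add: inj_def vimage_def)
  moreover have "antimono (\<lambda>j. delta \<alpha> (?q + Suc j))"
    by (intro antimonoI delta_antimono_beyond_diag_rank[OF assms]) simp_all
  ultimately obtain m where m: "length m = ?q" "\<forall>j. length (filter (\<lambda>x. j < x) m) = delta \<alpha> (?q + Suc j)"
    using exists_list_length_filter_greater[of "\<lambda>j. delta \<alpha> (?q + Suc j)" ?q]
      delta_le_diag_rank[OF assms] by blast
  have "delta (staircase_plus m) k = delta \<alpha> k" for k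
  proof (cases "k \<le> ?q")
    case True
    then show ?thesis
      using m(1) by (simp add: delta_staircase_plus delta_eq_self_below_diag_rank)
  next
    case False
    then obtain j where "k = ?q + Suc j"
      by (metis add_Suc_right less_imp_Suc_add not_le)
    then show ?thesis
      using m delta_staircase_plus_Suc[of m j] by simp
  qed
  then show ?thesis
    using m(1) by blast
qed

lemma diag_class_diag_rank_eq_image:
  assumes "\<alpha> \<in> partitions n" "0 < n"
    and m0: "length m0 = diag_rank \<alpha>" "delta (staircase_plus m0) = delta \<alpha>"
  shows "diag_class n (delta \<alpha>) \<inter> partitions_k n (diag_rank \<alpha>)
       = staircase_plus ` {m \<in> permutations_of_multiset (mset m0). ascents_le_one m}"
proof (intro equalityI subsetI)
  fix \<beta> assume "\<beta> \<in> diag_class n (delta \<alpha>) \<inter> partitions_k n (diag_rank \<alpha>)"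
  then have \<beta>: "\<beta> \<in> partitions n" "delta \<beta> = delta \<alpha>" "length \<beta> = diag_rank \<alpha>"
    by (auto simp: diag_class_def partitions_k_def)
  have "diag_rank \<beta> = diag_rank \<alpha>"
    using diag_rank_eq_Max_delta(3)[OF \<beta>(1) assms(2)] diag_rank_eq_Max_delta(3)[OF assms(1,2)] \<beta>(2)
    by simp
  then have "\<forall>i<length \<beta>. length \<beta> \<le> \<beta> ! i + i"
    using diag_rank_mem[of \<beta>] \<beta>(3) by simp
  then have "staircase_plus (staircase_excess \<beta>) = \<beta>"
    by (rule staircase_plus_excess)
  moreover have "ascents_le_one (staircase_excess \<beta>)"
    using \<beta>(1) by (intro ascents_le_one_staircase_excess) (simp add: partitions_def)
  moreover have "mset (staircase_excess \<beta>) = mset m0"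
    using delta_staircase_plus_eq_iff[of "staircase_excess \<beta>" m0] calculation(1) \<beta> m0 by simp
  ultimately show "\<beta> \<in> staircase_plus ` {m \<in> permutations_of_multiset (mset m0). ascents_le_one m}"
    unfolding permutations_of_multiset_def by (metis (mono_tags, lifting) image_eqI mem_Collect_eq)
next
  fix \<beta> assume "\<beta> \<in> staircase_plus ` {m \<in> permutations_of_multiset (mset m0). ascents_le_one m}"
  then obtain m where \<beta>: "\<beta> = staircase_plus m"
    and m: "mset m = mset m0" "ascents_le_one m"
    unfolding permutations_of_multiset_def by blast
  have length_m: "length m = diag_rank \<alpha>"
    using m(1) m0(1) by (metis size_mset)
  then have delta_\<beta>: "delta \<beta> = delta \<alpha>"
    using delta_staircase_plus_eq_iff[of m m0] m(1) m0 \<beta> by simp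
  have "sum_list \<alpha> = n"
    using assms(1) by (simp add: partitions_def)
  then have "sum_list (staircase_plus m) = n"
    using sum_list_eq_if_delta_eq[OF delta_\<beta>] \<beta> by simp
  then have "\<beta> \<in> partitions_k n (diag_rank \<alpha>)"
    using staircase_plus_in_partitions_k[OF m(2)] \<beta> length_m by simp
  then show "\<beta> \<in> diag_class n (delta \<alpha>) \<inter> partitions_k n (diag_rank \<alpha>)"
    using delta_\<beta> by (simp add: diag_class_def partitions_k_def)
qed

lemma card_diag_class_diag_rank:
  assumes "\<alpha> \<in> partitions n" "0 < n"
  defines "q \<equiv> diag_rank \<alpha>" and "L \<equiv> Max {k. delta \<alpha> k \<noteq> 0}"
    and "c \<equiv> \<lambda>v. delta \<alpha> (diag_rank \<alpha> + v) - delta \<alpha> (diag_rank \<alpha> + Suc v)"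
  shows "card (diag_class n (delta \<alpha>) \<inter> partitions_k n q) = (\<Prod>v<L - q. (c v + c (Suc v)) choose c v)"
proof -
  obtain m0 where m0: "length m0 = diag_rank \<alpha>" "delta (staircase_plus m0) = delta \<alpha>"
    using exists_staircase_plus_delta_eq[OF assms(1)] by blast
  have count: "count (mset m0) = c"
    using count_mset_eq_delta_staircase_plus[of m0] m0 by (simp add: c_def q_def fun_eq_iff)
  have bounded: "\<forall>x\<in>#mset m0. x \<le> L - q"
  proof
    fix x assume "x \<in># mset m0"
    then have "delta \<alpha> (q + x) \<noteq> 0"
      using count by (metis c_def q_def count_eq_zero_iff zero_diff)
    then show "x \<le> L - q"
      using diag_rank_eq_Max_delta(2)[OF assms(1,2), of "q + x", folded L_def] by linarith
  qed
  have "card (diag_class n (delta \<alpha>) \<inter> partitions_k n q)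
      = card {m \<in> permutations_of_multiset (mset m0). ascents_le_one m}"
    using diag_class_diag_rank_eq_image[OF assms(1,2) m0]
    by (simp add: q_def card_image inj_on_subset[OF inj_staircase_plus])
  also have "\<dots> = (\<Prod>v<L - q. (c v + c (Suc v)) choose c v)"
    using card_ascents_le_one[OF bounded] by (simp add: count)
  finally show ?thesis .
qed

theorem proposition4p4:
  fixes n :: nat and d :: "nat \<Rightarrow> nat"
  assumes "0 < n" and "d \<in> Delta n"
  defines "L \<equiv> Max {k. d k \<noteq> 0}"
  defines "q \<equiv> Max (d ` {1..L})"
  defines "b \<equiv> (\<lambda>i. if i < L then d i - d (Suc i) else d L)"
  shows "card (diag_class_k n d q) = card (diag_class n d \<inter> partitions_k n q)
       \<and> card (diag_class n d \<inter> partitions_k n q)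
           = (\<Prod>i\<in>{q..<L}. (b i + b (Suc i)) choose (b i))"
proof -
  obtain \<alpha> where \<alpha>: "\<alpha> \<in> partitions n" "d = delta \<alpha>"
    using assms(2) by (auto simp: Delta_def)
  note shape = diag_rank_eq_Max_delta[OF \<alpha>(1) assms(1), folded \<alpha>(2), folded L_def]
  have q: "q = diag_rank \<alpha>"
    unfolding q_def by (rule shape(3))
  define c where "c v = d (q + v) - d (q + Suc v)" for v
  have c_eq_b: "c v = b (q + v)" if "v \<le> L - q" for v
  proof (cases "q + v < L")
    case False
    then have "q + v = L"
      using that shape(1) q by simp
    then show ?thesis
      using shape(2)[of "Suc L"] by (simp add: b_def c_def)
  qed (simp add: b_def c_def)
  have "card (diag_class n d \<inter> partitions_k n q) = (\<Prod>v<L - q. (c v + c (Suc v)) choose c v)"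
    using card_diag_class_diag_rank[OF \<alpha>(1) assms(1)] by (simp add: c_def q L_def \<alpha>(2))
  also have "\<dots> = (\<Prod>v<L - q. (b (q + v) + b (Suc (q + v))) choose b (q + v))"
    by (rule prod.cong) (simp_all add: c_eq_b)
  also have "\<dots> = (\<Prod>i\<in>{q..<L}. (b i + b (Suc i)) choose b i)"
    by (simp add: prod.atLeastLessThan_shift_0[of _ q L] atLeast0LessThan comp_def)
  finally show ?thesis
    by (simp add: diag_class_k_def)
qed

end
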